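(* Let $A,B\in\operatorname{Sym}(n,\mathbb{R})$ be linearly independent, form a non-dissipative pair, and satisfy $\operatorname{maxrank}\{A,B\}\ge3$. Then there exists $z\in\mathbb{R}^n$ with ${}^tzAz={}^tzBz=0$ such that $Az$ and $Bz$ are linearly independent (i.e. $\partial\Gamma_A$ and $\partial\Gamma_B$ intersect transversally at $z$).
   Context: $A,B$ form a non-dissipative pair if $0$ is the only positive semidefinite element of $\operatorname{span}_{\mathbb{R}}\{A,B\}$. $\operatorname{maxrank}\{A,B\}$ is the maximal rank of elements of $\operatorname{span}_{\mathbb{R}}\{A,B\}$. $\Gamma_M=\{z:{}^tzMz\le0\}$. *)

theory Defs
  imports "HOL-Analysis.Analysis"
begin

definition symmetric_matrix :: "real^'n^'n \<Rightarrow> bool" where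
  "symmetric_matrix M \<longleftrightarrow> transpose M = M"

definition psd_matrix :: "real^'n^'n \<Rightarrow> bool" where
  "psd_matrix M \<longleftrightarrow> symmetric_matrix M \<and> (\<forall>z. z \<bullet> (M *v z) \<ge> 0)"

definition rspan2 :: "real^'n^'n \<Rightarrow> real^'n^'n \<Rightarrow> (real^'n^'n) set" where
  "rspan2 A B = {s *\<^sub>R A + t *\<^sub>R B | s t. True}"

definition non_dissipative_pair :: "real^'n^'n \<Rightarrow> real^'n^'n \<Rightarrow> bool" where
  "non_dissipative_pair A B \<longleftrightarrow> (\<forall>M\<in>rspan2 A B. psd_matrix M \<longrightarrow> M = 0)"

definition maxrank2 :: "real^'n^'n \<Rightarrow> real^'n^'n \<Rightarrow> nat" where
  "maxrank2 A B = Max (rank ` rspan2 A B)"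

definition lin_indep2 :: "'a::real_vector \<Rightarrow> 'a \<Rightarrow> bool" where
  "lin_indep2 u v \<longleftrightarrow> (\<forall>s t::real. s *\<^sub>R u + t *\<^sub>R v = 0 \<longrightarrow> s = 0 \<and> t = 0)"

end

theory Submission
  imports Defs "HOL-Library.Quadratic_Discriminant"
begin

text \<open>
  Let \<open>U\<close> be the span of the ranges of \<open>A\<close> and \<open>B\<close>, the orthogonal complement of their common
  kernel; an element of rank \<open>\<ge> 3\<close> in the pencil shows \<open>dim U \<ge> 3\<close>. By Calabi's theorem two
  quadratic forms without common nontrivial zero on a space of dimension \<open>\<ge> 3\<close> have a positive
  definite combination: as the unit sphere of \<open>U\<close> is simply connected, the point
  \<open>(z\<^sup>TAz, z\<^sup>TBz)\<close> has a continuous polar angle \<open>\<theta>\<close>, even in \<open>z\<close>, and evenness forces \<open>\<theta>\<close> to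
  vary by less than \<open>\<pi>\<close>. Such a combination would be positive semidefinite on all of \<open>\<real>\<^sup>n\<close>,
  contradicting non-dissipativity, so the forms have a common zero \<open>z\<^sub>0 \<in> U - {0}\<close>, and \<open>Az\<^sub>0\<close>,
  \<open>Bz\<^sub>0\<close> are not both zero. If they are dependent, some \<open>N = sA + tB\<close> kills \<open>z\<^sub>0\<close>; \<open>N\<close> is
  indefinite, so there is an \<open>N\<close>-isotropic \<open>w\<close> with \<open>Nw \<noteq> 0\<close> and \<open>w\<^sup>TMz\<^sub>0 \<noteq> 0\<close>, where
  \<open>M = -tA + sB\<close>, and the second common zero of \<open>N\<close> and \<open>M\<close> on the line through \<open>z\<^sub>0\<close> and \<open>w\<close>
  is transversal.
\<close>

section \<open>Quadratic forms\<close>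

lemma symmetric_matrix_inner_commute:
  fixes M :: "real^'n^'n"
  assumes "symmetric_matrix M"
  shows "x \<bullet> (M *v y) = y \<bullet> (M *v x)"
proof -
  have "x \<bullet> (M *v y) = (transpose M *v x) \<bullet> y"
    by (simp add: dot_lmul_matrix)
  with assms show ?thesis
    by (simp add: symmetric_matrix_def inner_commute)
qed

lemma symmetric_matrix_lincomb:
  fixes A B :: "real^'n^'n"
  assumes "symmetric_matrix A" "symmetric_matrix B"
  shows "symmetric_matrix (s *\<^sub>R A + t *\<^sub>R B)"
  using assms by (simp add: symmetric_matrix_def transpose_def vec_eq_iff)

lemma matrix_vector_mult_lincomb:
  fixes A B :: "real^'n^'m"
  shows "(s *\<^sub>R A + t *\<^sub>R B) *v z = s *\<^sub>R (A *v z) + t *\<^sub>R (B *v z)"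
  by (simp add: matrix_vector_mult_add_rdistrib scaleR_matrix_vector_assoc)

lemma quadratic_form_matrix_lincomb:
  fixes A B :: "real^'n^'n"
  shows "z \<bullet> ((s *\<^sub>R A + t *\<^sub>R B) *v z) = s * (z \<bullet> (A *v z)) + t * (z \<bullet> (B *v z))"
  by (simp add: matrix_vector_mult_lincomb inner_add_right)

lemma quadratic_form_vector_lincomb:
  fixes M :: "real^'n^'n"
  shows "(a *\<^sub>R x + b *\<^sub>R y) \<bullet> (M *v (a *\<^sub>R x + b *\<^sub>R y))
    = a\<^sup>2 * (x \<bullet> (M *v x)) + a * b * (x \<bullet> (M *v y) + y \<bullet> (M *v x)) + b\<^sup>2 * (y \<bullet> (M *v y))"
  by (simp add: matrix_vector_right_distrib matrix_vector_mult_scaleR inner_add_left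
      inner_add_right power2_eq_square algebra_simps)

lemma quadratic_form_scaleR:
  fixes M :: "real^'n^'n"
  shows "(k *\<^sub>R z) \<bullet> (M *v (k *\<^sub>R z)) = k\<^sup>2 * (z \<bullet> (M *v z))"
  by (simp add: matrix_vector_mult_scaleR power2_eq_square)

lemma continuous_on_quadratic_form:
  fixes M :: "real^'n^'n"
  shows "continuous_on S (\<lambda>z. z \<bullet> (M *v z))"
  by (intro continuous_intros linear_continuous_on matrix_vector_mul_bounded_linear)

lemma lin_indep2_if_quadratic_form_pos_neg:
  fixes Q :: "real^'n^'n"
  assumes pos: "x \<bullet> (Q *v x) > 0" and neg: "y \<bullet> (Q *v y) < 0"
  shows "lin_indep2 x y"
  unfolding lin_indep2_def
proof (intro allI impI)
  fix s t :: real
  assume st: "s *\<^sub>R x + t *\<^sub>R y = 0"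
  have "t = 0"
  proof (rule ccontr)
    assume "t \<noteq> 0"
    have "t *\<^sub>R y = (- s) *\<^sub>R x"
      using st by (simp add: eq_neg_iff_add_eq_0 add.commute)
    then have "t\<^sup>2 * (y \<bullet> (Q *v y)) = s\<^sup>2 * (x \<bullet> (Q *v x))"
      by (metis quadratic_form_scaleR power2_minus)
    moreover have "t\<^sup>2 * (y \<bullet> (Q *v y)) < 0"
      using \<open>t \<noteq> 0\<close> neg by (simp add: mult_pos_neg)
    ultimately show False
      using pos by (smt (verit) zero_le_mult_iff zero_le_power2)
  qed
  moreover have "x \<noteq> 0"
    using pos by auto
  ultimately show "s = 0 \<and> t = 0"
    using st by simp
qed

section \<open>Calabi's theorem\<close>

lemma rel_frontier_cball_Int_subspace:
  fixes U :: "'a::euclidean_space set"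
  assumes "subspace U"
  shows "rel_frontier (cball 0 1 \<inter> U) = sphere 0 1 \<inter> U"
proof -
  have "0 \<in> interior (cball (0::'a) 1) \<inter> U"
    using assms by (simp add: subspace_0)
  then have "interior (cball (0::'a) 1) \<inter> U \<noteq> {}"
    by blast
  then show ?thesis
    using convex_affine_rel_frontier_Int[OF convex_cball subspace_imp_affine[OF assms]] by simp
qed

lemma simply_connected_sphere_Int_subspace:
  fixes U :: "'a::euclidean_space set"
  assumes U: "subspace U" and dim: "dim U \<ge> 3"
  shows "simply_connected (sphere 0 1 \<inter> U)"
proof -
  have "0 \<in> U \<inter> interior (cball (0::'a) 1)"
    using U by (simp add: subspace_0)
  then have "U \<inter> interior (cball (0::'a) 1) \<noteq> {}"
    by blast
  then have "aff_dim (cball 0 1 \<inter> U) = aff_dim U"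
    using aff_dim_convex_Int_nonempty_interior[of U "cball 0 1"] U
    by (simp add: subspace_imp_convex Int_commute)
  then have "aff_dim (cball 0 1 \<inter> U) \<ge> 3"
    using dim by (simp add: aff_dim_subspace[OF U])
  then show ?thesis
    using simply_connected_sphere_gen[of "cball 0 1 \<inter> U"] U
    by (simp add: rel_frontier_cball_Int_subspace convex_Int subspace_imp_convex bounded_Int)
qed

lemma locally_path_connected_sphere_Int_subspace:
  fixes U :: "'a::euclidean_space set"
  assumes "subspace U"
  shows "locally path_connected (sphere 0 1 \<inter> U)"
  using ENR_imp_locally_path_connected[OF ENR_rel_frontier_convex[of "cball 0 1 \<inter> U"]] assms
  by (simp add: rel_frontier_cball_Int_subspace convex_Int subspace_imp_convex bounded_Int)

lemma normalized_in_sphere_Int_subspace: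
  fixes U :: "'a::euclidean_space set"
  assumes "subspace U" "z \<in> U" "z \<noteq> 0"
  shows "z /\<^sub>R norm z \<in> sphere 0 1 \<inter> U"
  using assms by (simp add: subspace_scale)

lemma continuous_logarithms_diff_constant:
  fixes g h :: "'a::topological_space \<Rightarrow> complex"
  assumes S: "connected S" and cont: "continuous_on S g" "continuous_on S h"
    and same_exp: "\<And>x. x \<in> S \<Longrightarrow> exp (g x) = exp (h x)"
  shows "(\<lambda>x. g x - h x) constant_on S"
proof (rule continuous_discrete_range_constant[OF S])
  show "continuous_on S (\<lambda>x. g x - h x)"
    using cont by (intro continuous_intros)
  have multiple: "\<exists>n::int. g x - h x = of_int (2 * n) * pi * \<i>" if "x \<in> S" for x
    using same_exp[OF that] by (metis exp_eq add_diff_cancel_left')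
  show "\<exists>e>0. \<forall>y. y \<in> S \<and> g y - h y \<noteq> g x - h x \<longrightarrow> e \<le> norm (g y - h y - (g x - h x))"
    if "x \<in> S" for x
  proof (intro exI[of _ "2 * pi"] conjI allI impI)
    fix y
    assume y: "y \<in> S \<and> g y - h y \<noteq> g x - h x"
    obtain n m :: int where n: "g x - h x = of_int (2 * n) * pi * \<i>"
      and m: "g y - h y = of_int (2 * m) * pi * \<i>"
      using multiple \<open>x \<in> S\<close> y by meson
    with y have "m \<noteq> n"
      by auto
    then have ge1: "1 \<le> \<bar>real_of_int (m - n)\<bar>"
      by linarith
    have "g y - h y - (g x - h x) = complex_of_real (2 * pi * real_of_int (m - n)) * \<i>"
      unfolding n m by (simp add: algebra_simps)
    moreover have "norm (complex_of_real r * \<i>) = \<bar>r\<bar>" for r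
      by (simp add: norm_mult)
    ultimately have "norm (g y - h y - (g x - h x)) = 2 * pi * \<bar>real_of_int (m - n)\<bar>"
      by (simp only: abs_mult) simp
    with ge1 show "2 * pi \<le> norm (g y - h y - (g x - h x))"
      by simp
  qed simp
qed

lemma continuous_even_polar_angle:
  fixes a b :: "'a::real_normed_vector \<Rightarrow> real"
  assumes S: "simply_connected S" "locally path_connected S"
    and neg: "\<And>z. z \<in> S \<Longrightarrow> - z \<in> S"
    and cont: "continuous_on S a" "continuous_on S b"
    and even: "\<And>z. a (- z) = a z" "\<And>z. b (- z) = b z"
    and nonzero: "\<And>z. z \<in> S \<Longrightarrow> a z \<noteq> 0 \<or> b z \<noteq> 0"
  obtains \<theta> \<rho> where "continuous_on S \<theta>" "\<And>z. z \<in> S \<Longrightarrow> \<rho> z > 0"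
    "\<And>z. z \<in> S \<Longrightarrow> a z = \<rho> z * cos (\<theta> z)" "\<And>z. z \<in> S \<Longrightarrow> b z = \<rho> z * sin (\<theta> z)"
    "\<And>z. z \<in> S \<Longrightarrow> \<theta> (- z) = \<theta> z"
proof -
  define f where "f z = complex_of_real (a z) + \<i> * complex_of_real (b z)" for z
  have "continuous_on S f"
    unfolding f_def using cont by (intro continuous_intros)
  moreover have "f z \<noteq> 0" if "z \<in> S" for z
    using nonzero[OF that] by (auto simp: f_def complex_eq_iff)
  ultimately obtain g where cont_g: "continuous_on S g" and fg: "\<And>z. z \<in> S \<Longrightarrow> f z = exp (g z)"
    using continuous_logarithm_on_simply_connected S by blast
  have cont_g_neg: "continuous_on S (\<lambda>z. g (- z))"
    by (rule continuous_on_compose2[OF cont_g]) (auto intro: continuous_intros neg)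
  have "(\<lambda>z. g (- z) - g z) constant_on S"
  proof (rule continuous_logarithms_diff_constant[OF simply_connected_imp_connected[OF S(1)] cont_g_neg cont_g])
    show "exp (g (- z)) = exp (g z)" if "z \<in> S" for z
      using fg[OF that] fg[OF neg[OF that]] even by (simp add: f_def)
  qed
  then obtain C where C: "\<And>z. z \<in> S \<Longrightarrow> g (- z) - g z = C"
    by (auto simp: constant_on_def)
  have g_even: "g (- z) = g z" if "z \<in> S" for z
    using C[OF that] C[OF neg[OF that]] by (simp add: algebra_simps)
  show ?thesis
  proof
    show "continuous_on S (\<lambda>z. Im (g z))"
      using cont_g by (intro continuous_intros)
    show "exp (Re (g z)) > 0" for z
      by simp
    show "a z = exp (Re (g z)) * cos (Im (g z))" if "z \<in> S" for z
      using arg_cong[OF fg[OF that], of Re] by (simp add: f_def Re_exp)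
    show "b z = exp (Re (g z)) * sin (Im (g z))" if "z \<in> S" for z
      using arg_cong[OF fg[OF that], of Im] by (simp add: f_def Im_exp)
    show "Im (g (- z)) = Im (g z)" if "z \<in> S" for z
      using g_even[OF that] by simp
  qed
qed

lemma polar_lincomb:
  fixes a b r \<theta> \<alpha> :: real
  assumes "a = r * cos \<theta>" "b = r * sin \<theta>"
  shows "cos \<alpha> * a + sin \<alpha> * b = r * cos (\<theta> - \<alpha>)"
  using assms by (simp add: cos_diff algebra_simps)

lemma quadratic_form_great_circle:
  fixes Q :: "real^'n^'n"
  assumes "x \<bullet> (Q *v x) = 0" "y \<bullet> (Q *v y) = 0"
  shows "(cos t *\<^sub>R x + sin t *\<^sub>R y) \<bullet> (Q *v (cos t *\<^sub>R x + sin t *\<^sub>R y))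
    = sin (2 * t) * ((x \<bullet> (Q *v y) + y \<bullet> (Q *v x)) / 2)"
  using assms by (simp add: quadratic_form_vector_lincomb sin_double)

lemma great_circle_in_sphere_Int_subspace:
  fixes U :: "'a::euclidean_space set"
  assumes U: "subspace U" and z1: "z1 \<in> sphere 0 1 \<inter> U" and z2: "z2 \<in> sphere 0 1 \<inter> U"
    and indep: "lin_indep2 z1 z2"
  defines "w t \<equiv> cos t *\<^sub>R z1 + sin t *\<^sub>R z2"
  shows "w t /\<^sub>R norm (w t) \<in> sphere 0 1 \<inter> U"
    and "continuous_on T (\<lambda>t. w t /\<^sub>R norm (w t))"
    and "w 0 /\<^sub>R norm (w 0) = z1" "w (pi / 2) /\<^sub>R norm (w (pi / 2)) = z2"
    and "w pi /\<^sub>R norm (w pi) = - z1"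
proof -
  have w_nonzero: "w t \<noteq> 0" for t
  proof
    assume "w t = 0"
    then have "cos t = 0 \<and> sin t = 0"
      using indep unfolding lin_indep2_def w_def by blast
    then show False
      using sin_cos_squared_add[of t] by simp
  qed
  show "w t /\<^sub>R norm (w t) \<in> sphere 0 1 \<inter> U"
    using normalized_in_sphere_Int_subspace[OF U _ w_nonzero] U z1 z2
    by (simp add: w_def subspace_add subspace_scale)
  show "continuous_on T (\<lambda>t. w t /\<^sub>R norm (w t))"
    unfolding w_def using w_nonzero[unfolded w_def] by (intro continuous_intros) auto
  show "w 0 /\<^sub>R norm (w 0) = z1" "w (pi / 2) /\<^sub>R norm (w (pi / 2)) = z2"
    and "w pi /\<^sub>R norm (w pi) = - z1"
    using z1 z2 by (simp_all add: w_def)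
qed

text \<open>
  Along the great circle \<open>t \<mapsto> cos t z\<^sub>1 + sin t z\<^sub>2\<close>, \<open>\<theta>\<close> runs from \<open>m\<close> to \<open>m + \<pi>\<close> and back
  to \<open>\<theta>(-z\<^sub>1) = m\<close>, so it takes the value \<open>m + \<pi>/2\<close> at some \<open>t\<^sub>1 \<in> [0, \<pi>/2]\<close> and some
  \<open>t\<^sub>2 \<in> [\<pi>/2, \<pi>]\<close>. The form \<open>R\<close> of angle \<open>m + \<pi>/2\<close> is positive at both points, but it
  vanishes at \<open>z\<^sub>1\<close> and \<open>z\<^sub>2\<close>, so on the circle it equals \<open>sin(2t) D\<close>, and \<open>sin(2t)\<close> has
  opposite signs at \<open>t\<^sub>1\<close> and \<open>t\<^sub>2\<close>.
\<close>

lemma polar_angle_no_half_turn: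
  fixes A B :: "real^'n^'n" and U :: "(real^'n) set"
  defines "S \<equiv> sphere 0 1 \<inter> U"
  assumes U: "subspace U" and cont: "continuous_on S \<theta>"
    and pos: "\<And>z. z \<in> S \<Longrightarrow> \<rho> z > 0"
    and polarA: "\<And>z. z \<in> S \<Longrightarrow> z \<bullet> (A *v z) = \<rho> z * cos (\<theta> z)"
    and polarB: "\<And>z. z \<in> S \<Longrightarrow> z \<bullet> (B *v z) = \<rho> z * sin (\<theta> z)"
    and even: "\<And>z. z \<in> S \<Longrightarrow> \<theta> (- z) = \<theta> z"
    and z1: "z1 \<in> S" and z2: "z2 \<in> S"
  shows "\<theta> z2 \<noteq> \<theta> z1 + pi"
proof
  assume half_turn: "\<theta> z2 = \<theta> z1 + pi"
  define m where "m = \<theta> z1"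
  define Q where "Q \<alpha> = cos \<alpha> *\<^sub>R A + sin \<alpha> *\<^sub>R B" for \<alpha>
  have polarQ: "z \<bullet> (Q \<alpha> *v z) = \<rho> z * cos (\<theta> z - \<alpha>)" if "z \<in> S" for z \<alpha>
    unfolding Q_def quadratic_form_matrix_lincomb
    using polar_lincomb[OF polarA[OF that] polarB[OF that]] .
  have "lin_indep2 z1 z2"
  proof (rule lin_indep2_if_quadratic_form_pos_neg)
    show "z1 \<bullet> (Q m *v z1) > 0"
      using polarQ[OF z1] pos[OF z1] by (simp add: m_def)
    show "z2 \<bullet> (Q m *v z2) < 0"
      using polarQ[OF z2] pos[OF z2] by (simp add: half_turn m_def)
  qed
  define w where "w t = cos t *\<^sub>R z1 + sin t *\<^sub>R z2" for t
  define p where "p t = w t /\<^sub>R norm (w t)" for t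
  note circle = great_circle_in_sphere_Int_subspace[OF U z1[unfolded S_def] z2[unfolded S_def]
      \<open>lin_indep2 z1 z2\<close>, folded S_def w_def, folded p_def]
  have cont_G: "continuous_on T (\<lambda>t. \<theta> (p t))" for T
    by (rule continuous_on_compose2[OF cont circle(2)]) (use circle(1) in auto)
  have G_0: "\<theta> (p 0) = m" and G_half: "\<theta> (p (pi / 2)) = m + pi" and G_pi: "\<theta> (p pi) = m"
    using circle(3-5) half_turn even[OF z1] by (simp_all add: m_def)
  define R where "R = Q (m + pi / 2)"
  define D where "D = (z1 \<bullet> (R *v z2) + z2 \<bullet> (R *v z1)) / 2"
  have R_w: "w t \<bullet> (R *v w t) = sin (2 * t) * D" for t
    unfolding w_def D_def
    by (rule quadratic_form_great_circle)
      (use polarQ[OF z1] polarQ[OF z2] in \<open>simp_all add: R_def m_def half_turn\<close>)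
  have quarter_turn: "sin (2 * t) * D > 0" if "\<theta> (p t) = m + pi / 2" for t
  proof -
    have "p t \<bullet> (R *v p t) > 0"
      using polarQ[OF circle(1)] pos[OF circle(1)] that by (simp add: R_def)
    moreover have "p t \<bullet> (R *v p t) = (inverse (norm (w t)))\<^sup>2 * (w t \<bullet> (R *v w t))"
      unfolding p_def by (rule quadratic_form_scaleR)
    ultimately show ?thesis
      by (simp add: R_w zero_less_mult_iff)
  qed
  obtain t1 where t1: "0 \<le> t1" "t1 \<le> pi / 2" "\<theta> (p t1) = m + pi / 2"
    using IVT'[of "\<lambda>t. \<theta> (p t)" 0 "m + pi / 2" "pi / 2"] G_0 G_half cont_G by auto
  obtain t2 where t2: "pi / 2 \<le> t2" "t2 \<le> pi" "\<theta> (p t2) = m + pi / 2"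
    using IVT2'[of "\<lambda>t. \<theta> (p t)" pi "m + pi / 2" "pi / 2"] G_pi G_half cont_G by auto
  have "sin (2 * t1) \<ge> 0"
    using t1 by (intro sin_ge_zero) auto
  moreover have "sin (2 * t2) \<le> 0"
    using sin_ge_zero[of "2 * pi - 2 * t2"] t2 by (simp add: sin_diff)
  ultimately show False
    using quarter_turn[OF t1(3)] quarter_turn[OF t2(3)]
    by (smt (verit) mult_nonneg_nonneg mult_nonpos_nonneg zero_less_mult_iff)
qed

lemma positive_combination_of_narrow_polar_angle:
  fixes A B :: "real^'n^'n" and U :: "(real^'n) set"
  defines "S \<equiv> sphere 0 1 \<inter> U"
  assumes U: "subspace U" and pos: "\<And>z. z \<in> S \<Longrightarrow> \<rho> z > 0"
    and polarA: "\<And>z. z \<in> S \<Longrightarrow> z \<bullet> (A *v z) = \<rho> z * cos (\<theta> z)"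
    and polarB: "\<And>z. z \<in> S \<Longrightarrow> z \<bullet> (B *v z) = \<rho> z * sin (\<theta> z)"
    and range: "\<And>z. z \<in> S \<Longrightarrow> lo \<le> \<theta> z \<and> \<theta> z \<le> hi" and width: "hi - lo < pi"
    and z: "z \<in> U" "z \<noteq> 0"
  shows "cos ((lo + hi) / 2) * (z \<bullet> (A *v z)) + sin ((lo + hi) / 2) * (z \<bullet> (B *v z)) > 0"
proof -
  define mid where "mid = (lo + hi) / 2"
  define z' where "z' = z /\<^sub>R norm z"
  have z'_S: "z' \<in> S"
    unfolding z'_def S_def using normalized_in_sphere_Int_subspace[OF U z] .
  have "cos (\<theta> z' - mid) > 0"
    using range[OF z'_S] width by (intro cos_gt_zero_pi) (auto simp: mid_def field_simps)
  then have "cos mid * (z' \<bullet> (A *v z')) + sin mid * (z' \<bullet> (B *v z')) > 0"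
    using polar_lincomb[OF polarA[OF z'_S] polarB[OF z'_S]] pos[OF z'_S] by simp
  moreover have "z \<bullet> (M *v z) = (norm z)\<^sup>2 * (z' \<bullet> (M *v z'))" for M :: "real^'n^'n"
    using quadratic_form_scaleR[of "norm z" z' M] z by (simp add: z'_def)
  then have "cos mid * (z \<bullet> (A *v z)) + sin mid * (z \<bullet> (B *v z))
      = (norm z)\<^sup>2 * (cos mid * (z' \<bullet> (A *v z')) + sin mid * (z' \<bullet> (B *v z')))"
    by (simp add: algebra_simps)
  ultimately show ?thesis
    using z by (simp add: mid_def)
qed

lemma calabi_positive_combination:
  fixes A B :: "real^'n^'n" and U :: "(real^'n) set"
  assumes U: "subspace U" and dim: "dim U \<ge> 3"
    and no_common_zero: "\<And>z. z \<in> U \<Longrightarrow> z \<noteq> 0 \<Longrightarrow> z \<bullet> (A *v z) \<noteq> 0 \<or> z \<bullet> (B *v z) \<noteq> 0"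
  obtains c d where "\<And>z. z \<in> U \<Longrightarrow> z \<noteq> 0 \<Longrightarrow> c * (z \<bullet> (A *v z)) + d * (z \<bullet> (B *v z)) > 0"
proof -
  define S where "S = sphere 0 1 \<inter> U"
  have simply_connected_S: "simply_connected S"
    unfolding S_def using simply_connected_sphere_Int_subspace[OF U dim] .
  have neg_S: "- z \<in> S" if "z \<in> S" for z
    using that U by (simp add: S_def subspace_neg)
  have even: "(- z) \<bullet> (M *v (- z)) = z \<bullet> (M *v z)" for M :: "real^'n^'n" and z
    using quadratic_form_scaleR[of "- 1" z M] by simp
  obtain \<theta> \<rho> where cont: "continuous_on S \<theta>" and pos: "\<And>z. z \<in> S \<Longrightarrow> \<rho> z > 0"
    and polarA: "\<And>z. z \<in> S \<Longrightarrow> z \<bullet> (A *v z) = \<rho> z * cos (\<theta> z)"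
    and polarB: "\<And>z. z \<in> S \<Longrightarrow> z \<bullet> (B *v z) = \<rho> z * sin (\<theta> z)"
    and even_\<theta>: "\<And>z. z \<in> S \<Longrightarrow> \<theta> (- z) = \<theta> z"
  proof (rule continuous_even_polar_angle)
    show "simply_connected S"
      by (fact simply_connected_S)
    show "locally path_connected S"
      unfolding S_def using locally_path_connected_sphere_Int_subspace[OF U] .
    show "z \<bullet> (A *v z) \<noteq> 0 \<or> z \<bullet> (B *v z) \<noteq> 0" if "z \<in> S" for z
      using that by (intro no_common_zero) (auto simp: S_def)
  qed (use neg_S even continuous_on_quadratic_form in auto)
  have "compact S"
    unfolding S_def using compact_Int_closed[OF compact_sphere closed_subspace[OF U]] by simp
  moreover have "S \<noteq> {}"
  proof -
    obtain u where "u \<in> U" "u \<noteq> 0"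
      using dim dim_eq_0[of U] by fastforce
    then show ?thesis
      using normalized_in_sphere_Int_subspace[OF U] unfolding S_def by blast
  qed
  ultimately obtain z1 zM where z1: "z1 \<in> S" and zM: "zM \<in> S"
    and range: "\<And>z. z \<in> S \<Longrightarrow> \<theta> z1 \<le> \<theta> z \<and> \<theta> z \<le> \<theta> zM"
    using continuous_attains_inf[OF _ _ cont] continuous_attains_sup[OF _ _ cont] by (metis (full_types))
  have width: "\<theta> zM - \<theta> z1 < pi"
  proof (rule ccontr)
    assume "\<not> ?thesis"
    moreover have "connected (\<theta> ` S)"
      using connected_continuous_image[OF cont simply_connected_imp_connected[OF simply_connected_S]] .
    ultimately have "\<theta> z1 + pi \<in> \<theta> ` S"
      using connectedD_interval[of "\<theta> ` S" "\<theta> z1" "\<theta> zM"] z1 zM by auto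
    then obtain z2 where "z2 \<in> S" "\<theta> z2 = \<theta> z1 + pi"
      by (metis imageE)
    then show False
      using polar_angle_no_half_turn[OF U cont[unfolded S_def], of \<rho> A B z1 z2]
        pos polarA polarB even_\<theta> z1 unfolding S_def by blast
  qed
  show ?thesis
    using that positive_combination_of_narrow_polar_angle[OF U pos polarA polarB range width,
        unfolded S_def] by blast
qed

section \<open>Transversal common zeros\<close>

definition joint_range :: "real^'n^'n \<Rightarrow> real^'n^'n \<Rightarrow> (real^'n) set" where
  "joint_range A B = span (range (\<lambda>x. A *v x) \<union> range (\<lambda>x. B *v x))"

lemma subspace_joint_range: "subspace (joint_range A B)"
  by (simp add: joint_range_def)

lemma matrix_vector_mult_in_joint_range: "A *v x \<in> joint_range A B" "B *v x \<in> joint_range A B"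
  by (auto simp: joint_range_def intro: span_base)

lemma rank_le_dim_joint_range:
  assumes "M \<in> rspan2 A B"
  shows "rank M \<le> dim (joint_range A B)"
proof -
  obtain s t where M: "M = s *\<^sub>R A + t *\<^sub>R B"
    using assms unfolding rspan2_def by blast
  have "M *v x \<in> joint_range A B" for x
    unfolding M matrix_vector_mult_lincomb
    by (intro subspace_add[OF subspace_joint_range] subspace_scale[OF subspace_joint_range]
        matrix_vector_mult_in_joint_range)
  then have "range (\<lambda>x. M *v x) \<subseteq> joint_range A B"
    by blast
  then show ?thesis
    by (simp add: rank_dim_range dim_subset)
qed

lemma orthogonal_joint_range_iff:
  fixes A B :: "real^'n^'n"
  assumes sA: "symmetric_matrix A" and sB: "symmetric_matrix B"
  shows "(\<forall>u\<in>joint_range A B. orthogonal k u) \<longleftrightarrow> A *v k = 0 \<and> B *v k = 0"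
proof
  assume orth: "\<forall>u\<in>joint_range A B. orthogonal k u"
  have "(A *v k) \<bullet> (A *v k) = k \<bullet> (A *v (A *v k))" "(B *v k) \<bullet> (B *v k) = k \<bullet> (B *v (B *v k))"
    using symmetric_matrix_inner_commute[OF sA] symmetric_matrix_inner_commute[OF sB] by metis+
  moreover have "k \<bullet> (A *v (A *v k)) = 0" "k \<bullet> (B *v (B *v k)) = 0"
    using orth matrix_vector_mult_in_joint_range unfolding orthogonal_def by blast+
  ultimately show "A *v k = 0 \<and> B *v k = 0"
    by simp
next
  assume "A *v k = 0 \<and> B *v k = 0"
  then have "orthogonal k u" if "u \<in> range (\<lambda>x. A *v x) \<union> range (\<lambda>x. B *v x)" for u
    using that symmetric_matrix_inner_commute[OF sA, of k] symmetric_matrix_inner_commute[OF sB, of k]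
    unfolding orthogonal_def by auto
  then show "\<forall>u\<in>joint_range A B. orthogonal k u"
    unfolding joint_range_def using orthogonal_to_span by blast
qed

lemma psd_if_nonneg_on_joint_range:
  fixes A B :: "real^'n^'n"
  assumes sA: "symmetric_matrix A" and sB: "symmetric_matrix B"
    and nonneg: "\<And>u. u \<in> joint_range A B \<Longrightarrow> u \<bullet> ((c *\<^sub>R A + d *\<^sub>R B) *v u) \<ge> 0"
  shows "psd_matrix (c *\<^sub>R A + d *\<^sub>R B)"
  unfolding psd_matrix_def
proof (intro conjI allI)
  define P where "P = c *\<^sub>R A + d *\<^sub>R B"
  show sP: "symmetric_matrix (c *\<^sub>R A + d *\<^sub>R B)"
    using symmetric_matrix_lincomb[OF sA sB] .
  fix x :: "real^'n"
  obtain y k where y: "y \<in> joint_range A B" and k: "\<And>u. u \<in> joint_range A B \<Longrightarrow> orthogonal k u"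
    and x: "x = y + k"
    using orthogonal_subspace_decomp_exists[of "range (\<lambda>x. A *v x) \<union> range (\<lambda>x. B *v x)" x,
        folded joint_range_def] by blast
  have "A *v k = 0 \<and> B *v k = 0"
    using k orthogonal_joint_range_iff[OF sA sB] by blast
  then have "P *v k = 0"
    by (simp add: P_def matrix_vector_mult_lincomb)
  then have "x \<bullet> (P *v x) = y \<bullet> (P *v y)"
    using symmetric_matrix_inner_commute[OF sP[folded P_def], of k y]
    by (simp add: x matrix_vector_right_distrib inner_add_left)
  then show "x \<bullet> ((c *\<^sub>R A + d *\<^sub>R B) *v x) \<ge> 0"
    using nonneg[OF y] by (simp add: P_def)
qed

lemma common_isotropic_vector_in_joint_range:
  fixes A B :: "real^'n^'n"
  assumes sA: "symmetric_matrix A" and sB: "symmetric_matrix B"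
    and not_psd: "\<And>s t. (s, t) \<noteq> (0, 0) \<Longrightarrow> \<not> psd_matrix (s *\<^sub>R A + t *\<^sub>R B)"
    and dim: "dim (joint_range A B) \<ge> 3"
  obtains z where "z \<in> joint_range A B" "z \<noteq> 0" "z \<bullet> (A *v z) = 0" "z \<bullet> (B *v z) = 0"
proof -
  have "\<exists>z\<in>joint_range A B. z \<noteq> 0 \<and> z \<bullet> (A *v z) = 0 \<and> z \<bullet> (B *v z) = 0"
  proof (rule ccontr)
    assume "\<not> ?thesis"
    then obtain c d where pos: "\<And>z. z \<in> joint_range A B \<Longrightarrow> z \<noteq> 0 \<Longrightarrow>
        c * (z \<bullet> (A *v z)) + d * (z \<bullet> (B *v z)) > 0"
      using calabi_positive_combination[OF subspace_joint_range dim] by blast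
    have "psd_matrix (c *\<^sub>R A + d *\<^sub>R B)"
    proof (rule psd_if_nonneg_on_joint_range[OF sA sB])
      show "u \<bullet> ((c *\<^sub>R A + d *\<^sub>R B) *v u) \<ge> 0" if "u \<in> joint_range A B" for u
        using pos[OF that] by (cases "u = 0") (auto simp: quadratic_form_matrix_lincomb)
    qed
    then have "(c, d) = (0, 0)"
      using not_psd[of c d] by blast
    moreover obtain u where "u \<in> joint_range A B" "u \<noteq> 0"
      using dim dim_eq_0[of "joint_range A B"] by fastforce
    ultimately show False
      using pos[of u] by simp
  qed
  then show thesis
    using that by blast
qed

lemma not_psd_lincomb:
  assumes "non_dissipative_pair A B" "lin_indep2 A B" "(s, t) \<noteq> (0, 0)"
  shows "\<not> psd_matrix (s *\<^sub>R A + t *\<^sub>R B)"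
proof
  assume "psd_matrix (s *\<^sub>R A + t *\<^sub>R B)"
  moreover have "s *\<^sub>R A + t *\<^sub>R B \<in> rspan2 A B"
    unfolding rspan2_def by blast
  ultimately have "s *\<^sub>R A + t *\<^sub>R B = 0"
    using assms(1) unfolding non_dissipative_pair_def by blast
  then have "s = 0 \<and> t = 0"
    using assms(2) unfolding lin_indep2_def by blast
  with assms(3) show False
    by simp
qed

lemma maxrank2_attained:
  fixes A B :: "real^'n^'n"
  shows "\<exists>M\<in>rspan2 A B. rank M = maxrank2 A B"
proof -
  have "rank ` rspan2 A B \<subseteq> {..CARD('n)}"
    using rank_bound by (auto simp: image_subset_iff)
  then have "finite (rank ` rspan2 A B)"
    by (rule finite_subset) simp
  moreover have "rank ` rspan2 A B \<noteq> {}"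
    unfolding rspan2_def by blast
  ultimately have "maxrank2 A B \<in> rank ` rspan2 A B"
    unfolding maxrank2_def by (rule Max_in)
  then show ?thesis
    by (metis imageE)
qed

lemma negative_vector_not_orthogonal:
  fixes N :: "real^'n^'n"
  assumes neg: "y \<bullet> (N *v y) < 0" and v: "v \<noteq> 0"
  obtains y' where "y' \<bullet> (N *v y') < 0" "y' \<bullet> v \<noteq> 0"
proof (cases "y \<bullet> v = 0")
  case False
  with neg that show thesis
    by blast
next
  case True
  define f where "f e = (y + e *\<^sub>R v) \<bullet> (N *v (y + e *\<^sub>R v))" for e :: real
  have "continuous_on UNIV (\<lambda>e::real. y + e *\<^sub>R v)"
    by (intro continuous_intros)
  then have "continuous_on UNIV f"
    unfolding f_def by (rule continuous_on_compose2[OF continuous_on_quadratic_form]) auto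
  then have "(f \<longlongrightarrow> f 0) (at 0)"
    by (simp add: continuous_on_eq_continuous_at isContD)
  moreover have "f 0 < 0"
    using neg by (simp add: f_def)
  ultimately have "\<forall>\<^sub>F e in at 0. f e < 0"
    by (rule order_tendstoD)
  then obtain d where "d > 0" and small: "\<And>e. e \<noteq> 0 \<Longrightarrow> dist e 0 < d \<Longrightarrow> f e < 0"
    unfolding eventually_at by blast
  then have "f (d / 2) < 0"
    by simp
  moreover have "(y + (d / 2) *\<^sub>R v) \<bullet> v \<noteq> 0"
    using True \<open>d > 0\<close> v by (simp add: inner_add_left)
  ultimately show thesis
    using that unfolding f_def by blast
qed

lemma isotropic_vector_not_orthogonal:
  fixes N :: "real^'n^'n"
  assumes sN: "symmetric_matrix N" and pos: "x \<bullet> (N *v x) > 0" and neg: "y \<bullet> (N *v y) < 0"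
    and v: "v \<noteq> 0"
  obtains w where "w \<bullet> (N *v w) = 0" "N *v w \<noteq> 0" "w \<bullet> v \<noteq> 0"
proof -
  obtain y' where neg': "y' \<bullet> (N *v y') < 0" and y'v: "y' \<bullet> v \<noteq> 0"
    using negative_vector_not_orthogonal[OF neg v] .
  define a where "a = y' \<bullet> (N *v y')"
  define b where "b = x \<bullet> (N *v y') + y' \<bullet> (N *v x)"
  define c where "c = x \<bullet> (N *v x)"
  have on_line: "(x + t *\<^sub>R y') \<bullet> (N *v (x + t *\<^sub>R y')) = a * t\<^sup>2 + b * t + c" for t
    using quadratic_form_vector_lincomb[of 1 x t y' N] by (simp add: a_def b_def c_def algebra_simps)
  have not_kernel: "N *v (x + t *\<^sub>R y') \<noteq> 0" for t
  proof
    assume "N *v (x + t *\<^sub>R y') = 0"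
    then have Nx: "N *v x = - t *\<^sub>R (N *v y')"
      by (simp add: matrix_vector_right_distrib matrix_vector_mult_scaleR eq_neg_iff_add_eq_0)
    have "c = - t * (y' \<bullet> (N *v x))"
      using symmetric_matrix_inner_commute[OF sN, of x y'] by (simp add: c_def Nx)
    also have "\<dots> = t\<^sup>2 * a"
      by (simp add: Nx a_def power2_eq_square)
    finally have "c = t\<^sup>2 * a" .
    moreover have "t\<^sup>2 * a \<le> 0"
      using neg' by (simp add: a_def mult_nonneg_nonpos)
    ultimately show False
      using pos by (simp add: c_def)
  qed
  have "discrim a b c > 0"
    using pos neg' by (simp add: discrim_def a_def c_def) (smt (verit) mult_neg_pos zero_le_power2)
  then obtain t1 t2 where "t1 \<noteq> t2" and roots: "a * t1\<^sup>2 + b * t1 + c = 0" "a * t2\<^sup>2 + b * t2 + c = 0"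
    using discriminant_pos_ex[of a b c] neg' by (auto simp: a_def)
  have "(x + t1 *\<^sub>R y') \<bullet> v \<noteq> 0 \<or> (x + t2 *\<^sub>R y') \<bullet> v \<noteq> 0"
  proof (rule ccontr)
    assume "\<not> ?thesis"
    then have "x \<bullet> v + t1 * (y' \<bullet> v) = 0" "x \<bullet> v + t2 * (y' \<bullet> v) = 0"
      by (simp_all add: inner_add_left)
    then have "(t1 - t2) * (y' \<bullet> v) = 0"
      by (simp only: left_diff_distrib)
    with \<open>t1 \<noteq> t2\<close> y'v show False
      by simp
  qed
  then show thesis
    using that on_line roots not_kernel by metis
qed

text \<open>
  Every point of the line through \<open>z\<^sub>0\<close> and \<open>w\<close> is \<open>N\<close>-isotropic; \<open>z\<close> is its second
  \<open>M\<close>-isotropic point besides \<open>z\<^sub>0\<close>.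
\<close>

lemma transversal_zero_on_line:
  fixes N M :: "real^'n^'n"
  assumes sN: "symmetric_matrix N" and sM: "symmetric_matrix M"
    and Nz0: "N *v z0 = 0" and Mz0: "z0 \<bullet> (M *v z0) = 0"
    and Nw: "w \<bullet> (N *v w) = 0" "N *v w \<noteq> 0" and w_Mz0: "w \<bullet> (M *v z0) \<noteq> 0"
  defines "z \<equiv> (- (w \<bullet> (M *v w))) *\<^sub>R z0 + (2 * (w \<bullet> (M *v z0))) *\<^sub>R w"
  shows "z \<bullet> (N *v z) = 0" "z \<bullet> (M *v z) = 0" "lin_indep2 (N *v z) (M *v z)"
proof -
  define c where "c = w \<bullet> (M *v z0)"
  define d where "d = w \<bullet> (M *v w)"
  have z: "z = (- d) *\<^sub>R z0 + (2 * c) *\<^sub>R w"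
    by (simp add: z_def c_def d_def)
  have z0Nw: "z0 \<bullet> (N *v w) = 0" and z0Mw: "z0 \<bullet> (M *v w) = c"
    using symmetric_matrix_inner_commute[OF sN, of z0 w] symmetric_matrix_inner_commute[OF sM, of z0 w]
    by (simp_all add: Nz0 c_def)
  have Nz: "N *v z = (2 * c) *\<^sub>R (N *v w)"
    unfolding z matrix_vector_right_distrib matrix_vector_mult_scaleR Nz0 by simp
  have Mz: "M *v z = (- d) *\<^sub>R (M *v z0) + (2 * c) *\<^sub>R (M *v w)"
    unfolding z matrix_vector_right_distrib matrix_vector_mult_scaleR ..
  show "z \<bullet> (N *v z) = 0"
    unfolding z quadratic_form_vector_lincomb by (simp add: Nz0 Nw z0Nw)
  show "z \<bullet> (M *v z) = 0"
    unfolding z quadratic_form_vector_lincomb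
    by (simp add: Mz0 z0Mw flip: c_def d_def) (simp add: power2_eq_square algebra_simps)
  show "lin_indep2 (N *v z) (M *v z)"
    unfolding lin_indep2_def
  proof (intro allI impI)
    fix s t :: real
    assume st: "s *\<^sub>R (N *v z) + t *\<^sub>R (M *v z) = 0"
    then have "z0 \<bullet> (s *\<^sub>R (N *v z) + t *\<^sub>R (M *v z)) = 0"
      by simp
    then have "t * (2 * c * c) = 0"
      by (simp add: Nz Mz z0Nw z0Mw Mz0 algebra_simps)
    then have "t = 0"
      using w_Mz0 by (simp add: c_def)
    with st have "s *\<^sub>R (2 * c) *\<^sub>R (N *v w) = 0"
      by (simp add: Nz)
    then have "s = 0"
      using Nw(2) w_Mz0 by (simp add: c_def)
    with \<open>t = 0\<close> show "s = 0 \<and> t = 0"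
      by simp
  qed
qed

lemma transversal_zero_of_kernel_vector:
  fixes N M :: "real^'n^'n"
  assumes sN: "symmetric_matrix N" and sM: "symmetric_matrix M"
    and Nz0: "N *v z0 = 0" and Mz0: "z0 \<bullet> (M *v z0) = 0" "M *v z0 \<noteq> 0"
    and pos: "x \<bullet> (N *v x) > 0" and neg: "y \<bullet> (N *v y) < 0"
  obtains z where "z \<bullet> (N *v z) = 0" "z \<bullet> (M *v z) = 0" "lin_indep2 (N *v z) (M *v z)"
proof -
  obtain w where "w \<bullet> (N *v w) = 0" "N *v w \<noteq> 0" "w \<bullet> (M *v z0) \<noteq> 0"
    using isotropic_vector_not_orthogonal[OF sN pos neg Mz0(2)] .
  then show thesis
    using transversal_zero_on_line[OF sN sM Nz0 Mz0(1)] that by blast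
qed

lemma rotated_lincombs_eq_zero:
  fixes x y :: "'a::real_vector"
  assumes st: "(s, t) \<noteq> (0, 0)"
    and eq1: "s *\<^sub>R x + t *\<^sub>R y = 0" and eq2: "(- t) *\<^sub>R x + s *\<^sub>R y = 0"
  shows "x = 0 \<and> y = 0"
proof -
  have "(s\<^sup>2 + t\<^sup>2) *\<^sub>R x = s *\<^sub>R (s *\<^sub>R x + t *\<^sub>R y) - t *\<^sub>R ((- t) *\<^sub>R x + s *\<^sub>R y)"
    and "(s\<^sup>2 + t\<^sup>2) *\<^sub>R y = t *\<^sub>R (s *\<^sub>R x + t *\<^sub>R y) + s *\<^sub>R ((- t) *\<^sub>R x + s *\<^sub>R y)"
    by (simp_all add: algebra_simps power2_eq_square)
  then have "(s\<^sup>2 + t\<^sup>2) *\<^sub>R x = 0" "(s\<^sup>2 + t\<^sup>2) *\<^sub>R y = 0"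
    by (simp_all only: eq1 eq2 scaleR_zero_right diff_zero add_0_right)
  moreover have "s\<^sup>2 + t\<^sup>2 \<noteq> 0"
    using st by simp
  ultimately show ?thesis
    by (meson scaleR_eq_0_iff)
qed

lemma lin_indep2_of_rotated:
  fixes u v :: "'a::real_vector"
  assumes st: "(s, t) \<noteq> (0, 0)"
    and indep: "lin_indep2 (s *\<^sub>R u + t *\<^sub>R v) ((- t) *\<^sub>R u + s *\<^sub>R v)"
  shows "lin_indep2 u v"
  unfolding lin_indep2_def
proof (intro allI impI)
  fix a b :: real
  assume ab: "a *\<^sub>R u + b *\<^sub>R v = 0"
  have "(s * a + t * b) *\<^sub>R (s *\<^sub>R u + t *\<^sub>R v) + ((- t) * a + s * b) *\<^sub>R ((- t) *\<^sub>R u + s *\<^sub>R v)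
      = (s\<^sup>2 + t\<^sup>2) *\<^sub>R (a *\<^sub>R u + b *\<^sub>R v)"
    by (simp add: algebra_simps power2_eq_square)
  then have "(s * a + t * b) *\<^sub>R (s *\<^sub>R u + t *\<^sub>R v) + ((- t) * a + s * b) *\<^sub>R ((- t) *\<^sub>R u + s *\<^sub>R v) = 0"
    by (simp only: ab scaleR_zero_right)
  then have "s * a + t * b = 0 \<and> (- t) * a + s * b = 0"
    using indep unfolding lin_indep2_def by blast
  then show "a = 0 \<and> b = 0"
    using rotated_lincombs_eq_zero[OF st, of a b] by simp
qed

lemma pencil_element_indefinite:
  fixes A B :: "real^'n^'n"
  assumes sA: "symmetric_matrix A" and sB: "symmetric_matrix B"
    and not_psd: "\<And>s t. (s, t) \<noteq> (0, 0) \<Longrightarrow> \<not> psd_matrix (s *\<^sub>R A + t *\<^sub>R B)"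
    and st: "(s, t) \<noteq> (0, 0)"
  obtains x y where "x \<bullet> ((s *\<^sub>R A + t *\<^sub>R B) *v x) > 0" "y \<bullet> ((s *\<^sub>R A + t *\<^sub>R B) *v y) < 0"
proof -
  have negative: "\<exists>x. x \<bullet> ((a *\<^sub>R A + b *\<^sub>R B) *v x) < 0" if "(a, b) \<noteq> (0, 0)" for a b
    using not_psd[OF that] symmetric_matrix_lincomb[OF sA sB] by (auto simp: psd_matrix_def not_le)
  obtain x where "x \<bullet> (((- s) *\<^sub>R A + (- t) *\<^sub>R B) *v x) < 0"
    using negative[of "- s" "- t"] st by auto
  then have "x \<bullet> ((s *\<^sub>R A + t *\<^sub>R B) *v x) > 0"
    unfolding quadratic_form_matrix_lincomb by simp
  with negative[OF st] that show thesis
    by blast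
qed

lemma transversal_zero_of_common_zero:
  fixes A B :: "real^'n^'n"
  assumes sA: "symmetric_matrix A" and sB: "symmetric_matrix B"
    and not_psd: "\<And>s t. (s, t) \<noteq> (0, 0) \<Longrightarrow> \<not> psd_matrix (s *\<^sub>R A + t *\<^sub>R B)"
    and zero: "z0 \<bullet> (A *v z0) = 0" "z0 \<bullet> (B *v z0) = 0"
    and not_kernel: "\<not> (A *v z0 = 0 \<and> B *v z0 = 0)"
  shows "\<exists>z. z \<bullet> (A *v z) = 0 \<and> z \<bullet> (B *v z) = 0 \<and> lin_indep2 (A *v z) (B *v z)"
proof (cases "lin_indep2 (A *v z0) (B *v z0)")
  case True
  with zero show ?thesis
    by blast
next
  case False
  then obtain s t where st: "(s, t) \<noteq> (0, 0)" and dep: "s *\<^sub>R (A *v z0) + t *\<^sub>R (B *v z0) = 0"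
    unfolding lin_indep2_def by auto
  define N where "N = s *\<^sub>R A + t *\<^sub>R B"
  define M where "M = (- t) *\<^sub>R A + s *\<^sub>R B"
  have sN: "symmetric_matrix N" and sM: "symmetric_matrix M"
    unfolding N_def M_def using symmetric_matrix_lincomb[OF sA sB] by blast+
  have Nz0: "N *v z0 = 0"
    unfolding N_def matrix_vector_mult_lincomb by (fact dep)
  have Mz0: "z0 \<bullet> (M *v z0) = 0"
    unfolding M_def quadratic_form_matrix_lincomb by (simp add: zero)
  have "M *v z0 \<noteq> 0"
  proof
    assume "M *v z0 = 0"
    then have "(- t) *\<^sub>R (A *v z0) + s *\<^sub>R (B *v z0) = 0"
      unfolding M_def matrix_vector_mult_lincomb .
    then show False
      using rotated_lincombs_eq_zero[OF st dep] not_kernel by blast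
  qed
  moreover obtain x y where "x \<bullet> (N *v x) > 0" "y \<bullet> (N *v y) < 0"
    unfolding N_def by (rule pencil_element_indefinite[OF sA sB not_psd st])
  ultimately obtain z where z: "z \<bullet> (N *v z) = 0" "z \<bullet> (M *v z) = 0" "lin_indep2 (N *v z) (M *v z)"
    using transversal_zero_of_kernel_vector[OF sN sM Nz0 Mz0] by blast
  have "s * (z \<bullet> (A *v z)) + t * (z \<bullet> (B *v z)) = 0"
    and "(- t) * (z \<bullet> (A *v z)) + s * (z \<bullet> (B *v z)) = 0"
    using z(1,2) unfolding N_def M_def quadratic_form_matrix_lincomb .
  then have "z \<bullet> (A *v z) = 0 \<and> z \<bullet> (B *v z) = 0"
    using rotated_lincombs_eq_zero[OF st, of "z \<bullet> (A *v z)" "z \<bullet> (B *v z)"] by simp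
  moreover have "lin_indep2 (A *v z) (B *v z)"
    using lin_indep2_of_rotated[OF st] z(3) unfolding N_def M_def matrix_vector_mult_lincomb .
  ultimately show ?thesis
    by blast
qed

theorem theorem2p9:
  fixes A B :: "real^'n^'n"
  assumes "symmetric_matrix A" and "symmetric_matrix B"
    and "lin_indep2 A B"
    and "non_dissipative_pair A B"
    and "maxrank2 A B \<ge> 3"
  shows "\<exists>z :: real^'n. z \<bullet> (A *v z) = 0 \<and> z \<bullet> (B *v z) = 0
           \<and> lin_indep2 (A *v z) (B *v z)"
proof -
  have not_psd: "\<not> psd_matrix (s *\<^sub>R A + t *\<^sub>R B)" if "(s, t) \<noteq> (0, 0)" for s t
    using not_psd_lincomb[OF assms(4,3) that] .
  obtain M where "M \<in> rspan2 A B" "rank M = maxrank2 A B"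
    using maxrank2_attained by blast
  then have "dim (joint_range A B) \<ge> 3"
    using rank_le_dim_joint_range assms(5) by fastforce
  then obtain z0 where z0: "z0 \<in> joint_range A B" "z0 \<noteq> 0"
    and zero: "z0 \<bullet> (A *v z0) = 0" "z0 \<bullet> (B *v z0) = 0"
    using common_isotropic_vector_in_joint_range[OF assms(1,2) not_psd] by blast
  have "\<not> (A *v z0 = 0 \<and> B *v z0 = 0)"
    using orthogonal_joint_range_iff[OF assms(1,2), of z0] z0 by (auto simp: orthogonal_def)
  then show ?thesis
    using transversal_zero_of_common_zero[OF assms(1,2) not_psd zero] by blast
qed

end
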